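(* If $S\in\Delta^2_n$, then $$E(S)=\frac{1}{\pi}\int_{-\infty}^{\infty}\frac{1}{z^2}\log\Big|1+\sum_{j=1}^{\lfloor n/2\rfloor}(-1)^j c_{2j}(S)\,z^{2j}\Big|\,dz .$$
   Context: A sidigraph is a digraph (no loops, at most one arc from $u$ to $v$) with a sign $\sigma(a)\in\{-1,1\}$ on each arc; its adjacency matrix $A(S)$ has entry $\sigma(v_i,v_j)$ if there is an arc from $v_i$ to $v_j$ and $0$ otherwise, and $\phi_S(z)=\det(zI-A(S))$. The energy of a sidigraph $S$ with eigenvalues $z_1,\dots,z_n$ is $E(S)=\sum_{j=1}^n|\Re z_j|$. The sign of a directed cycle is the product of its arc signs. $\Delta^2_n$ is the class of sidigraphs on $n$ vertices whose underlying digraph is bipartite and in which every directed cycle is negative. $c_{2j}(S)$ is the number of linear subsidigraphs of $S$ of order $2j$ (subsidigraphs on $2j$ vertices in which every vertex has indegree and outdegree $1$); for $S\in\Delta^2_n$ one has $\phi_S(z)=z^n+\sum_{j=1}^{\lfloor n/2\rfloor}c_{2j}(S)z^{n-2j}$. The integral is understood as a principal value. *)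

theory Defs
  imports "HOL-Analysis.Analysis" "Jordan_Normal_Form.Char_Poly" "HOL-Combinatorics.Permutations"
begin

definition sidigraph :: "nat \<Rightarrow> (nat \<Rightarrow> nat \<Rightarrow> bool) \<Rightarrow> (nat \<Rightarrow> nat \<Rightarrow> int) \<Rightarrow> bool" where
  "sidigraph n Ar \<sigma> \<longleftrightarrow>
     (\<forall>u v. Ar u v \<longrightarrow> u < n \<and> v < n \<and> u \<noteq> v \<and> (\<sigma> u v = 1 \<or> \<sigma> u v = -1))"

definition adj_matrix :: "nat \<Rightarrow> (nat \<Rightarrow> nat \<Rightarrow> bool) \<Rightarrow> (nat \<Rightarrow> nat \<Rightarrow> int) \<Rightarrow> complex mat" where
  "adj_matrix n Ar \<sigma> = mat n n (\<lambda>(i, j). if Ar i j then of_int (\<sigma> i j) else 0)"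

definition sidi_energy :: "nat \<Rightarrow> (nat \<Rightarrow> nat \<Rightarrow> bool) \<Rightarrow> (nat \<Rightarrow> nat \<Rightarrow> int) \<Rightarrow> real" where
  "sidi_energy n Ar \<sigma> =
     sum_mset (image_mset (\<lambda>z. \<bar>Re z\<bar>) (proots (char_poly (adj_matrix n Ar \<sigma>))))"

definition directed_cycle :: "nat \<Rightarrow> (nat \<Rightarrow> nat \<Rightarrow> bool) \<Rightarrow> nat list \<Rightarrow> bool" where
  "directed_cycle n Ar vs \<longleftrightarrow> length vs \<ge> 2 \<and> distinct vs \<and> set vs \<subseteq> {0..<n} \<and>
     (\<forall>i < length vs. Ar (vs ! i) (vs ! ((i + 1) mod length vs)))"

definition cycle_sign :: "(nat \<Rightarrow> nat \<Rightarrow> int) \<Rightarrow> nat list \<Rightarrow> int" where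
  "cycle_sign \<sigma> vs = (\<Prod>i < length vs. \<sigma> (vs ! i) (vs ! ((i + 1) mod length vs)))"

definition bipartite_underlying :: "nat \<Rightarrow> (nat \<Rightarrow> nat \<Rightarrow> bool) \<Rightarrow> bool" where
  "bipartite_underlying n Ar \<longleftrightarrow>
     (\<exists>X \<subseteq> {0..<n}. \<forall>u v. Ar u v \<longrightarrow> (u \<in> X \<longleftrightarrow> v \<notin> X))"

definition Delta2 :: "nat \<Rightarrow> (nat \<Rightarrow> nat \<Rightarrow> bool) \<Rightarrow> (nat \<Rightarrow> nat \<Rightarrow> int) \<Rightarrow> bool" where
  "Delta2 n Ar \<sigma> \<longleftrightarrow> sidigraph n Ar \<sigma> \<and> bipartite_underlying n Ar \<and>
     (\<forall>vs. directed_cycle n Ar vs \<longrightarrow> cycle_sign \<sigma> vs = -1)"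

text \<open>Number of linear subsidigraphs of order k: a vertex set U with card U = k together with
  a choice of arcs giving every vertex of U in- and outdegree 1 inside U, i.e. a permutation
  f of U with an Ar from u to f u for each u in U.\<close>
definition num_linear :: "nat \<Rightarrow> (nat \<Rightarrow> nat \<Rightarrow> bool) \<Rightarrow> nat \<Rightarrow> nat" where
  "num_linear n Ar k = card {(U, f). U \<subseteq> {0..<n} \<and> card U = k \<and> f permutes U \<and>
                                       (\<forall>u \<in> U. Ar u (f u))}"

end

theory Submission
  imports Defs "HOL-Combinatorics.Cycles" "HOL-Real_Asymp.Real_Asymp"
begin

text \<open>
  In the Leibniz expansion of \<open>det (zI - A)\<close> only permutations moving every vertex along an arc
  survive. Each of their cycles is a directed cycle of the sidigraph, hence negative, and this sign
  exactly cancels the sign of the cycle as a permutation; bipartiteness forces an even number of moved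
  vertices. Hence \<open>\<phi>\<^sub>S(z) = z^n + \<Sum>\<^sub>j c\<^sub>2\<^sub>j z^(n-2j)\<close>, and the polynomial under the
  logarithm is \<open>\<Prod>\<^sub>k (1 + i x z\<^sub>k)\<close> over the eigenvalues \<open>z\<^sub>k\<close>.

  For a single factor, \<open>ln |1 + i x z| / x\<^sup>2\<close> has the explicit primitive
  \<open>-Re (w Ln w) / x - Im z ln |x|\<close> with \<open>w = 1 + i x z\<close>. Its contribution near \<open>0\<close> vanishes,
  and at infinity it tends to \<open>\<pi> |Re z|\<close>, because \<open>Ln (-i z)\<close> and \<open>Ln (i z)\<close> differ by
  \<open>\<plusminus>i\<pi>\<close> with the sign of \<open>Re z\<close>.
\<close>

section \<open>The characteristic polynomial of a sidigraph in \<open>\<Delta>\<^sup>2\<^sub>n\<close>\<close>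

lemma sign_cycle_of_list:
  "distinct cs \<Longrightarrow> sign (cycle_of_list cs) = (-1::int) ^ (length cs - 1)"
proof (induction cs rule: cycle_of_list.induct)
  case (1 i j cs)
  have "sign (cycle_of_list (i # j # cs)) =
        sign (Transposition.transpose i j) * sign (cycle_of_list (j # cs))"
    by (simp add: sign_compose permutation_swap_id permutation_of_cycle)
  also have "\<dots> = - ((-1) ^ length cs)"
    using 1 by (simp add: sign_swap_id)
  finally show ?case
    by (simp del: cycle_of_list.simps)
qed auto

lemma cycle_of_list_nth:
  assumes "distinct cs" "k < length cs"
  shows "cycle_of_list cs (cs ! k) = cs ! ((k + 1) mod length cs)"
proof -
  have "map (cycle_of_list cs) cs = rotate 1 cs"
    using cyclic_rotation[OF assms(1), of 1] by (simp add: id_def o_def)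
  then have "map (cycle_of_list cs) cs ! k = rotate 1 cs ! k"
    by simp
  then show ?thesis
    using assms by (simp add: nth_rotate1)
qed

lemma cycle_decomp_permutes: "cycle_decomp I p \<Longrightarrow> p permutes I \<and> finite I"
proof (induction rule: cycle_decomp.induct)
  case empty
  then show ?case
    by (auto simp: permutes_def)
next
  case (comp I p cs)
  have "cycle_of_list cs permutes (set cs \<union> I)"
    by (rule permutes_subset[OF cycle_permutes]) auto
  moreover have "p permutes (set cs \<union> I)"
    by (rule permutes_subset[of p I]) (use comp.IH in auto)
  ultimately have "cycle_of_list cs \<circ> p permutes (set cs \<union> I)"
    by (rule permutes_compose[rotated])
  then show ?case
    using comp.IH by (simp add: o_def)
qed

lemma cycle_of_list_support:
  assumes cs: "distinct cs" and "2 \<le> length cs"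
  shows "{i. cycle_of_list cs i \<noteq> i} = set cs"
proof
  show "{i. cycle_of_list cs i \<noteq> i} \<subseteq> set cs"
    using id_outside_supp by fastforce
  have "cycle_of_list cs (cs ! k) \<noteq> cs ! k" if "k < length cs" for k
  proof -
    have "(k + 1) mod length cs \<noteq> k" "(k + 1) mod length cs < length cs"
      using assms(2) that by (auto simp: Suc_le_eq mod_Suc)
    then show ?thesis
      using cycle_of_list_nth[OF cs that] cs that by (simp add: nth_eq_iff_index_eq)
  qed
  then show "set cs \<subseteq> {i. cycle_of_list cs i \<noteq> i}"
    by (auto simp: in_set_conv_nth)
qed

definition arc_perms :: "nat \<Rightarrow> (nat \<Rightarrow> nat \<Rightarrow> bool) \<Rightarrow> (nat \<Rightarrow> nat) set" where
  "arc_perms n Ar = {p. p permutes {0..<n} \<and> (\<forall>i. p i \<noteq> i \<longrightarrow> Ar i (p i))}"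

lemma arc_perms_support_subset:
  "p \<in> arc_perms n Ar \<Longrightarrow> {i. p i \<noteq> i} \<subseteq> {0..<n}"
  by (auto simp: arc_perms_def dest: permutes_not_in)

lemma finite_arc_perms: "finite (arc_perms n Ar)"
  by (rule finite_subset[OF _ finite_permutations[of "{0..<n}"]]) (auto simp: arc_perms_def)

lemma Delta2_cycle_weight:
  assumes D: "Delta2 n Ar \<sigma>" and cs: "distinct cs"
    and arcs: "\<And>i. cycle_of_list cs i \<noteq> i \<Longrightarrow> Ar i (cycle_of_list cs i)"
  shows "sign (cycle_of_list cs) * (\<Prod>i\<in>{i. cycle_of_list cs i \<noteq> i}. - \<sigma> i (cycle_of_list cs i)) = 1"
proof (cases "length cs \<ge> 2")
  case False
  then have "cycle_of_list cs = id"
    by (cases cs rule: cycle_of_list.cases) auto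
  then show ?thesis
    by simp
next
  case True
  let ?c = "cycle_of_list cs" and ?m = "length cs"
  have supp: "{i. ?c i \<noteq> i} = set cs"
    using cycle_of_list_support[OF cs True] .
  have arc: "Ar (cs ! k) (cs ! ((k + 1) mod ?m))" if "k < ?m" for k
  proof -
    have "?c (cs ! k) \<noteq> cs ! k"
      using supp nth_mem[OF that] by blast
    then show ?thesis
      using arcs cycle_of_list_nth[OF cs that] by metis
  qed
  have "set cs \<subseteq> {0..<n}"
    using arc D True by (force simp: in_set_conv_nth Delta2_def sidigraph_def)
  then have "directed_cycle n Ar cs"
    unfolding directed_cycle_def using True cs arc by auto
  then have negative: "cycle_sign \<sigma> cs = -1"
    using D by (simp add: Delta2_def)
  have "set cs = (!) cs ` {..<?m}" "inj_on ((!) cs) {..<?m}"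
    using cs by (auto simp: in_set_conv_nth inj_on_def nth_eq_iff_index_eq)
  then have "(\<Prod>i\<in>set cs. - \<sigma> i (?c i)) = (\<Prod>k<?m. - \<sigma> (cs ! k) (?c (cs ! k)))"
    by (simp add: prod.reindex)
  also have "\<dots> = (-1) ^ ?m * cycle_sign \<sigma> cs"
    unfolding cycle_sign_def using cycle_of_list_nth[OF cs] by (simp add: prod_uminus)
  finally have "(\<Prod>i\<in>set cs. - \<sigma> i (?c i)) = - ((-1) ^ ?m)"
    using negative by simp
  moreover obtain j where "?m = Suc j"
    using True by (cases ?m) auto
  ultimately show ?thesis
    by (simp add: supp sign_cycle_of_list[OF cs] flip: power_add mult_2)
qed

lemma comp_disjoint_support:
  assumes "inj g" and disjoint: "{i. f i \<noteq> i} \<inter> {i. g i \<noteq> i} = {}"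
  shows "f i \<noteq> i \<Longrightarrow> (f \<circ> g) i = f i" and "g i \<noteq> i \<Longrightarrow> (f \<circ> g) i = g i"
proof -
  show "(f \<circ> g) i = f i" if "f i \<noteq> i"
    using that disjoint by auto
  show "(f \<circ> g) i = g i" if "g i \<noteq> i"
  proof -
    have "g (g i) \<noteq> g i"
      using that injD[OF \<open>inj g\<close>] by metis
    then show ?thesis
      using disjoint by auto
  qed
qed

lemma prod_support_comp_disjoint:
  fixes h :: "'a \<Rightarrow> 'a \<Rightarrow> 'b::comm_monoid_mult"
  assumes f: "permutation f" and g: "permutation g"
    and disjoint: "{i. f i \<noteq> i} \<inter> {i. g i \<noteq> i} = {}"
  shows "(\<Prod>i\<in>{i. (f \<circ> g) i \<noteq> i}. h i ((f \<circ> g) i)) =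
         (\<Prod>i\<in>{i. f i \<noteq> i}. h i (f i)) * (\<Prod>i\<in>{i. g i \<noteq> i}. h i (g i))"
proof -
  note comp = comp_disjoint_support[OF bij_is_inj[OF permutation_bijective[OF g]] disjoint]
  have "(f \<circ> g) i \<noteq> i \<longleftrightarrow> f i \<noteq> i \<or> g i \<noteq> i" for i
    using comp[of i] by (cases "f i = i"; cases "g i = i") auto
  then have "{i. (f \<circ> g) i \<noteq> i} = {i. f i \<noteq> i} \<union> {i. g i \<noteq> i}"
    by auto
  then have "(\<Prod>i\<in>{i. (f \<circ> g) i \<noteq> i}. h i ((f \<circ> g) i)) =
      (\<Prod>i\<in>{i. f i \<noteq> i}. h i ((f \<circ> g) i)) * (\<Prod>i\<in>{i. g i \<noteq> i}. h i ((f \<circ> g) i))"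
    using permutation_finite_support[OF f] permutation_finite_support[OF g] disjoint
    by (simp add: prod.union_disjoint)
  also have "\<dots> = (\<Prod>i\<in>{i. f i \<noteq> i}. h i (f i)) * (\<Prod>i\<in>{i. g i \<noteq> i}. h i (g i))"
    using comp by (intro arg_cong2[where f = "(*)"] prod.cong) simp_all
  finally show ?thesis .
qed

lemma Delta2_arc_perm_weight:
  assumes D: "Delta2 n Ar \<sigma>" and "cycle_decomp I p" and "\<And>i. p i \<noteq> i \<Longrightarrow> Ar i (p i)"
  shows "sign p * (\<Prod>i\<in>{i. p i \<noteq> i}. - \<sigma> i (p i)) = 1"
  using assms(2,3)
proof (induction rule: cycle_decomp.induct)
  case empty
  then show ?case
    by simp
next
  case (comp I q cs)
  let ?c = "cycle_of_list cs"
  have c: "permutation ?c"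
    by (rule permutation_of_cycle)
  have q: "permutation q"
    using cycle_decomp_permutes[OF comp.hyps(1)] permutes_imp_permutation by blast
  have "{i. ?c i \<noteq> i} \<subseteq> set cs" "{i. q i \<noteq> i} \<subseteq> I"
    using id_outside_supp cycle_decomp_permutes[OF comp.hyps(1)] permutes_not_in by fastforce+
  then have disjoint: "{i. ?c i \<noteq> i} \<inter> {i. q i \<noteq> i} = {}"
    using comp.hyps(3) by blast
  note comp_apply = comp_disjoint_support[OF bij_is_inj[OF permutation_bijective[OF q]] disjoint]
  have weight_c: "sign ?c * (\<Prod>i\<in>{i. ?c i \<noteq> i}. - \<sigma> i (?c i)) = 1"
    using comp.prems comp_apply(1) by (intro Delta2_cycle_weight[OF D comp.hyps(2)]) metis
  have weight_q: "sign q * (\<Prod>i\<in>{i. q i \<noteq> i}. - \<sigma> i (q i)) = 1"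
    using comp.prems comp_apply(2) by (intro comp.IH) metis
  have "sign (?c \<circ> q) * (\<Prod>i\<in>{i. (?c \<circ> q) i \<noteq> i}. - \<sigma> i ((?c \<circ> q) i)) =
      (sign ?c * (\<Prod>i\<in>{i. ?c i \<noteq> i}. - \<sigma> i (?c i))) * (sign q * (\<Prod>i\<in>{i. q i \<noteq> i}. - \<sigma> i (q i)))"
    unfolding sign_compose[OF c q] prod_support_comp_disjoint[OF c q disjoint, of "\<lambda>i j. - \<sigma> i j"]
    by (simp only: mult_ac)
  then show ?case
    using weight_c weight_q by (simp add: o_def)
qed

lemma bipartite_arc_perm_support_even:
  assumes "bipartite_underlying n Ar" and p: "p \<in> arc_perms n Ar"
  shows "even (card {i. p i \<noteq> i})"
proof -
  obtain X where X: "\<And>u v. Ar u v \<Longrightarrow> u \<in> X \<longleftrightarrow> v \<notin> X"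
    using assms(1) unfolding bipartite_underlying_def by blast
  let ?U = "{i. p i \<noteq> i}"
  have perm: "p permutes {0..<n}" and arc: "\<And>i. i \<in> ?U \<Longrightarrow> Ar i (p i)"
    using p by (auto simp: arc_perms_def)
  have fin: "finite ?U"
    using arc_perms_support_subset[OF p] finite_subset by blast
  have inj: "inj p"
    using permutes_inj[OF perm] .
  have closed: "p i \<in> ?U" if "i \<in> ?U" for i
    using that inj by (auto dest: injD)
  \<comment> \<open>\<open>p\<close> swaps the two colour classes of its support\<close>
  have "p ` (?U \<inter> X) \<subseteq> ?U - X" "p ` (?U - X) \<subseteq> ?U \<inter> X"
    using closed arc X by blast+
  then have "card (?U \<inter> X) \<le> card (?U - X)" "card (?U - X) \<le> card (?U \<inter> X)"
    using fin by (auto intro!: card_inj_on_le[OF inj_on_subset[OF inj]])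
  moreover have "card ?U = card (?U \<inter> X) + card (?U - X)"
    using fin by (subst card_Un_disjoint[symmetric]) (auto intro!: arg_cong[where f = card])
  ultimately show ?thesis
    by presburger
qed

lemma neg_char_matrix_adj_matrix_entry:
  assumes "i < n" "j < n"
  shows "(- char_matrix (adj_matrix n Ar \<sigma>) t) $$ (i, j) =
         (if i = j then t else 0) - (if Ar i j then of_int (\<sigma> i j) else 0)"
  using assms by (simp add: char_matrix_def adj_matrix_def)

lemma Delta2_leibniz_term:
  fixes t :: complex
  assumes D: "Delta2 n Ar \<sigma>" and p: "p permutes {0..<n}"
  shows "signof p * (\<Prod>i = 0..<n. (- char_matrix (adj_matrix n Ar \<sigma>) t) $$ (i, p i)) =
         (if p \<in> arc_perms n Ar then t ^ (n - card {i. p i \<noteq> i}) else 0)"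
proof -
  have no_loop: "\<not> Ar i i" for i
    using D by (auto simp: Delta2_def sidigraph_def)
  have p_lt: "p i < n" if "i < n" for i
    using permutes_in_image[OF p] that by simp
  have entry: "(- char_matrix (adj_matrix n Ar \<sigma>) t) $$ (i, p i) =
      (if p i = i then t else if Ar i (p i) then - of_int (\<sigma> i (p i)) else 0)" if "i < n" for i
    using neg_char_matrix_adj_matrix_entry[OF that p_lt[OF that]] no_loop by auto
  show ?thesis
  proof (cases "p \<in> arc_perms n Ar")
    case False
    then obtain i where "p i \<noteq> i" "\<not> Ar i (p i)"
      using p by (auto simp: arc_perms_def)
    moreover from this have "i < n"
      using permutes_not_in[OF p] by fastforce
    ultimately show ?thesis
      using False entry by (auto intro!: prod_zero bexI[of _ i])
  next
    case True
    let ?U = "{i. p i \<noteq> i}"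
    have U: "?U \<subseteq> {0..<n}"
      using arc_perms_support_subset[OF True] .
    have "sign p * (\<Prod>i\<in>?U. - \<sigma> i (p i)) = 1"
      using True Delta2_arc_perm_weight[OF D cycle_decomposition[OF p]] by (simp add: arc_perms_def)
    then have weight: "of_int (sign p) * of_int (\<Prod>i\<in>?U. - \<sigma> i (p i)) = (1 :: complex)"
      by (metis of_int_1 of_int_mult)
    have fixed: "{0..<n} \<inter> {i. p i = i} = {0..<n} - ?U" and moved: "{0..<n} \<inter> - {i. p i = i} = ?U"
      using U by auto
    have card_fixed: "card ({0..<n} - ?U) = n - card ?U"
      using U by (simp add: card_Diff_subset finite_subset)
    have "(\<Prod>i = 0..<n. (- char_matrix (adj_matrix n Ar \<sigma>) t) $$ (i, p i)) =
          (\<Prod>i = 0..<n. if p i = i then t else - of_int (\<sigma> i (p i)))"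
      using True entry by (intro prod.cong) (auto simp: arc_perms_def)
    also have "\<dots> = t ^ (n - card ?U) * of_int (\<Prod>i\<in>?U. - \<sigma> i (p i))"
      unfolding prod.If_cases[OF finite_atLeastLessThan] fixed moved prod_constant card_fixed by simp
    finally show ?thesis
      using True weight by (simp add: mult.left_commute)
  qed
qed

lemma Delta2_char_poly_arc_perms:
  fixes t :: complex
  assumes D: "Delta2 n Ar \<sigma>"
  shows "poly (char_poly (adj_matrix n Ar \<sigma>)) t = (\<Sum>p\<in>arc_perms n Ar. t ^ (n - card {i. p i \<noteq> i}))"
proof -
  let ?A = "adj_matrix n Ar \<sigma>"
  have A: "?A \<in> carrier_mat n n"
    by (simp add: adj_matrix_def)
  have "poly (char_poly ?A) t = det (- char_matrix ?A t)"
    by (rule char_poly_matrix[OF A])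
  also have "\<dots> = (\<Sum>p\<in>{p. p permutes {0..<n}}. signof p * (\<Prod>i = 0..<n. (- char_matrix ?A t) $$ (i, p i)))"
    unfolding det_def using A by (simp add: char_matrix_def)
  also have "\<dots> = (\<Sum>p\<in>{p. p permutes {0..<n}}. if p \<in> arc_perms n Ar then t ^ (n - card {i. p i \<noteq> i}) else 0)"
    using Delta2_leibniz_term[OF D] by (intro sum.cong) auto
  also have "\<dots> = (\<Sum>p\<in>{p \<in> {p. p permutes {0..<n}}. p \<in> arc_perms n Ar}. t ^ (n - card {i. p i \<noteq> i}))"
    by (rule sum.inter_filter[symmetric]) (simp add: finite_permutations)
  also have "{p \<in> {p. p permutes {0..<n}}. p \<in> arc_perms n Ar} = arc_perms n Ar"
    by (auto simp: arc_perms_def)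
  finally show ?thesis .
qed

lemma support_arc_permutes:
  assumes "f permutes U" and "\<And>u. u \<in> U \<Longrightarrow> Ar u (f u)" and "\<And>i. \<not> Ar i i"
  shows "{i. f i \<noteq> i} = U"
proof
  show "{i. f i \<noteq> i} \<subseteq> U"
    using permutes_not_in[OF assms(1)] by blast
  show "U \<subseteq> {i. f i \<noteq> i}"
  proof
    fix u assume "u \<in> U"
    then show "u \<in> {i. f i \<noteq> i}"
      using assms(2,3)[of u] by auto
  qed
qed

text \<open>A linear subsidigraph \<open>(U, f)\<close> is determined by \<open>f\<close>, since without loops \<open>U\<close> is the support of \<open>f\<close>.\<close>

lemma card_arc_perms_support:
  assumes no_loop: "\<And>i. \<not> Ar i i"
  shows "card {p \<in> arc_perms n Ar. card {i. p i \<noteq> i} = k} = num_linear n Ar k"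
proof -
  let ?L = "{(U, f). U \<subseteq> {0..<n} \<and> card U = k \<and> f permutes U \<and> (\<forall>u \<in> U. Ar u (f u))}"
  have supp: "{i. f i \<noteq> i} = U" if "(U, f) \<in> ?L" for U f
    using that no_loop support_arc_permutes[of f U Ar] by auto
  have inj: "inj_on snd ?L"
  proof (rule inj_onI)
    fix x y assume "x \<in> ?L" "y \<in> ?L" "snd x = snd y"
    moreover obtain U f V g where "x = (U, f)" "y = (V, g)"
      by fastforce
    ultimately show "x = y"
      using supp[of U f] supp[of V g] by simp
  qed
  have image: "snd ` ?L = {p \<in> arc_perms n Ar. card {i. p i \<noteq> i} = k}"
  proof (intro equalityI subsetI)
    fix p assume "p \<in> snd ` ?L"
    then obtain U where U: "(U, p) \<in> ?L"
      by force
    then have "p permutes {0..<n}"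
      using permutes_subset by blast
    then show "p \<in> {p \<in> arc_perms n Ar. card {i. p i \<noteq> i} = k}"
      using U supp[OF U] by (auto simp: arc_perms_def)
  next
    fix p assume p: "p \<in> {p \<in> arc_perms n Ar. card {i. p i \<noteq> i} = k}"
    then have "p permutes {i. p i \<noteq> i}"
      by (auto simp: arc_perms_def permutes_def)
    then have "({i. p i \<noteq> i}, p) \<in> ?L"
      using p arc_perms_support_subset[of p n Ar] by (auto simp: arc_perms_def)
    then show "p \<in> snd ` ?L"
      by (rule rev_image_eqI) simp
  qed
  show ?thesis
    unfolding num_linear_def image[symmetric] card_image[OF inj] ..
qed

lemma num_linear_0: "num_linear n Ar 0 = 1"
proof -
  have "{(U, f). U \<subseteq> {0..<n} \<and> card U = 0 \<and> f permutes U \<and> (\<forall>u \<in> U. Ar u (f u))} = {({}, id)}"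
    by (auto dest: finite_subset)
  then show ?thesis
    unfolding num_linear_def by simp
qed

lemma Delta2_char_poly:
  fixes t :: complex
  assumes D: "Delta2 n Ar \<sigma>"
  shows "poly (char_poly (adj_matrix n Ar \<sigma>)) t =
         t ^ n + (\<Sum>j = 1..n div 2. of_nat (num_linear n Ar (2 * j)) * t ^ (n - 2 * j))"
proof -
  let ?s = "\<lambda>p. card {i. p i \<noteq> i}"
  define T where "T = insert 0 ((\<lambda>j. 2 * j) ` {1..n div 2})"
  have no_loop: "\<not> Ar i i" for i
    using D by (auto simp: Delta2_def sidigraph_def)
  have "?s p \<in> T" if p: "p \<in> arc_perms n Ar" for p
  proof -
    have "even (?s p)"
      using bipartite_arc_perm_support_even[OF _ p] D by (simp add: Delta2_def)
    moreover have "?s p \<le> n"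
      using card_mono[OF _ arc_perms_support_subset[OF p]] by simp
    ultimately show ?thesis
      unfolding T_def by (cases "?s p = 0") (auto elim!: evenE intro!: image_eqI)
  qed
  then have "poly (char_poly (adj_matrix n Ar \<sigma>)) t =
      (\<Sum>k\<in>T. \<Sum>p\<in>{p \<in> arc_perms n Ar. ?s p = k}. t ^ (n - ?s p))"
    unfolding Delta2_char_poly_arc_perms[OF D]
    by (intro sum.group[symmetric] finite_arc_perms) (auto simp: T_def)
  also have "\<dots> = (\<Sum>k\<in>T. of_nat (num_linear n Ar k) * t ^ (n - k))"
  proof (rule sum.cong[OF refl])
    fix k
    have "(\<Sum>p\<in>{p \<in> arc_perms n Ar. ?s p = k}. t ^ (n - ?s p)) =
        (\<Sum>p\<in>{p \<in> arc_perms n Ar. ?s p = k}. t ^ (n - k))"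
      by (rule sum.cong) auto
    also have "\<dots> = of_nat (card {p \<in> arc_perms n Ar. ?s p = k}) * t ^ (n - k)"
      by (rule sum_constant)
    also have "\<dots> = of_nat (num_linear n Ar k) * t ^ (n - k)"
      unfolding card_arc_perms_support[OF no_loop] ..
    finally show "(\<Sum>p\<in>{p \<in> arc_perms n Ar. ?s p = k}. t ^ (n - ?s p)) = of_nat (num_linear n Ar k) * t ^ (n - k)" .
  qed
  also have "\<dots> = of_nat (num_linear n Ar 0) * t ^ n +
      (\<Sum>k\<in>(\<lambda>j. 2 * j) ` {1..n div 2}. of_nat (num_linear n Ar k) * t ^ (n - k))"
    unfolding T_def by (subst sum.insert) auto
  also have "\<dots> = t ^ n + (\<Sum>j = 1..n div 2. of_nat (num_linear n Ar (2 * j)) * t ^ (n - 2 * j))"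
    by (subst sum.reindex) (auto simp: inj_on_def num_linear_0)
  finally show ?thesis .
qed

lemma sidi_energy_eigenvalues:
  "\<exists>z. sidi_energy n Ar \<sigma> = (\<Sum>k<n. \<bar>Re (z k)\<bar>) \<and>
       (\<forall>t. poly (char_poly (adj_matrix n Ar \<sigma>)) t = (\<Prod>k<n. t - z k))"
proof -
  have "adj_matrix n Ar \<sigma> \<in> carrier_mat n n"
    by (simp add: adj_matrix_def)
  then obtain zs where zs: "char_poly (adj_matrix n Ar \<sigma>) = (\<Prod>a\<leftarrow>zs. [:- a, 1:])" "length zs = n"
    using char_poly_factorized by blast
  have "proots (\<Prod>a\<leftarrow>zs. [:- a, 1:]) = (\<Sum>q\<leftarrow>map (\<lambda>a. [:- a, 1:]) zs. proots q)"
    by (subst proots_prod_list[symmetric]) auto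
  also have "\<dots> = mset zs"
    by (induction zs) auto
  finally have "proots (\<Prod>a\<leftarrow>zs. [:- a, 1:]) = mset zs" .
  then have "sidi_energy n Ar \<sigma> = sum_list (map (\<lambda>z. \<bar>Re z\<bar>) zs)"
    by (simp add: sidi_energy_def zs(1) sum_mset_sum_list flip: mset_map)
  also have "\<dots> = (\<Sum>k<n. \<bar>Re (zs ! k)\<bar>)"
    unfolding sum_list_sum_nth by (auto simp: zs(2) atLeast0LessThan intro!: sum.cong)
  finally have "sidi_energy n Ar \<sigma> = (\<Sum>k<n. \<bar>Re (zs ! k)\<bar>)" .
  moreover have "poly (\<Prod>a\<leftarrow>zs. [:- a, 1:]) t = (\<Prod>k<n. t - zs ! k)" for t
    by (simp add: poly_prod prod.list_conv_set_nth zs(2) lessThan_atLeast0 flip: zs(2))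
  ultimately show ?thesis
    using zs(1) by (intro exI[of _ "(!) zs"]) auto
qed

section \<open>The reciprocal polynomial\<close>

lemma power_mult_one_over_power:
  fixes w :: "'a::field"
  assumes "w \<noteq> 0" "k \<le> n"
  shows "w ^ n * (1 / w) ^ (n - k) = w ^ k"
proof -
  have "w ^ n = w ^ k * w ^ (n - k)"
    using assms(2) by (simp flip: power_add)
  moreover have "w ^ (n - k) * (1 / w) ^ (n - k) = 1"
    using assms(1) by (simp flip: power_mult_distrib)
  ultimately show ?thesis
    by (simp add: mult.assoc)
qed

definition root_factor :: "complex \<Rightarrow> real \<Rightarrow> complex" where
  "root_factor z x = 1 + \<i> * of_real x * z"

lemma prod_root_factor_reciprocal:
  fixes z :: "'i \<Rightarrow> complex" and c :: "nat \<Rightarrow> real" and x :: real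
  assumes I: "finite I" "card I = n"
    and q: "\<And>t. (\<Prod>i\<in>I. t - z i) = t ^ n + (\<Sum>j = 1..n div 2. of_real (c j) * t ^ (n - 2 * j))"
  shows "(\<Prod>i\<in>I. root_factor (z i) x) = of_real (1 + (\<Sum>j = 1..n div 2. (-1) ^ j * c j * x ^ (2 * j)))"
proof (cases "x = 0")
  case True
  then show ?thesis
    by (simp add: root_factor_def power_0_left)
next
  case False
  define w where "w = - \<i> * of_real x"
  have w: "w \<noteq> 0"
    using False by (simp add: w_def)
  have w_pow: "w ^ n * (1 / w) ^ (n - 2 * j) = of_real ((-1) ^ j * x ^ (2 * j))"
    if "j \<in> {1..n div 2}" for j
  proof -
    have "w ^ n * (1 / w) ^ (n - 2 * j) = w ^ (2 * j)"
      using w that by (intro power_mult_one_over_power) auto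
    also have "\<dots> = (w\<^sup>2) ^ j"
      by (simp add: power_mult)
    also have "\<dots> = (- (of_real x)\<^sup>2) ^ j"
      unfolding w_def by (simp add: power_mult_distrib)
    also have "\<dots> = of_real ((-1) ^ j * x ^ (2 * j))"
      by (simp add: power_minus' power_mult)
    finally show ?thesis .
  qed
  have "(\<Prod>i\<in>I. root_factor (z i) x) = (\<Prod>i\<in>I. w * (1 / w - z i))"
    using w by (intro prod.cong) (auto simp: root_factor_def w_def field_simps)
  also have "\<dots> = w ^ n * (\<Prod>i\<in>I. 1 / w - z i)"
    using I by (simp add: prod.distrib)
  also have "\<dots> = w ^ n * (1 / w) ^ n + (\<Sum>j = 1..n div 2. of_real (c j) * (w ^ n * (1 / w) ^ (n - 2 * j)))"
    by (simp add: q distrib_left sum_distrib_left mult_ac)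
  also have "(\<Sum>j = 1..n div 2. of_real (c j) * (w ^ n * (1 / w) ^ (n - 2 * j))) =
      (\<Sum>j = 1..n div 2. of_real ((-1) ^ j * c j * x ^ (2 * j)))"
    by (intro sum.cong) (simp_all add: w_pow)
  finally show ?thesis
    using w by (simp add: power_one_over)
qed

section \<open>An explicit primitive of \<open>ln |1 + i x z| / x\<^sup>2\<close>\<close>

definition xLn :: "complex \<Rightarrow> real" where
  "xLn u = Re (u * Ln u)"

definition log_primitive :: "complex \<Rightarrow> real \<Rightarrow> real" where
  "log_primitive z x = - xLn (root_factor z x) / x - Im z * ln \<bar>x\<bar>"

lemma DERIV_ln_abs: "x \<noteq> 0 \<Longrightarrow> ((\<lambda>x. ln \<bar>x\<bar>) has_real_derivative 1 / x) (at x)"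
proof -
  assume x: "x \<noteq> 0"
  then have "0 < x * x"
    using not_real_square_gt_zero by blast
  have "ln \<bar>y\<bar> = ln (y\<^sup>2) / 2" for y :: real
  proof (cases "y = 0")
    case False
    then have "ln (\<bar>y\<bar> ^ 2) = 2 * ln \<bar>y\<bar>"
      by (subst ln_realpow) auto
    then show ?thesis
      unfolding power2_abs by linarith
  qed simp
  then have "(\<lambda>x. ln \<bar>x\<bar>) = (\<lambda>y::real. ln (y\<^sup>2) / 2)"
    by (rule ext)
  moreover have "((\<lambda>y. ln (y\<^sup>2) / 2) has_real_derivative 1 / x) (at x)"
    using x \<open>0 < x * x\<close> by (auto intro!: derivative_eq_intros simp: field_simps power2_eq_square)
  ultimately show ?thesis
    by simp
qed

lemma DERIV_mult_ln_abs:
  "r \<noteq> 0 \<Longrightarrow> ((\<lambda>r. r * ln \<bar>r\<bar>) has_real_derivative ln \<bar>r\<bar> + 1) (at r)"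
  using DERIV_mult[OF DERIV_ident DERIV_ln_abs, of r] by simp

lemma isCont_mult_ln_abs: "isCont (\<lambda>r::real. r * ln \<bar>r\<bar>) r"
proof (cases "r = 0")
  case True
  have "((\<lambda>r::real. r * ln \<bar>r\<bar>) \<longlongrightarrow> 0) (at_right 0)" "((\<lambda>r::real. r * ln \<bar>r\<bar>) \<longlongrightarrow> 0) (at_left 0)"
    by real_asymp+
  then show ?thesis
    using True by (simp add: isCont_def filterlim_at_split)
next
  case False
  then show ?thesis
    using DERIV_mult_ln_abs DERIV_isCont by blast
qed

lemma xLn_of_real: "xLn (of_real r) = r * ln \<bar>r\<bar>"
  by (cases "r = 0") (simp_all add: xLn_def)

lemma xLn_scaleR:
  assumes "r > 0"
  shows "xLn (of_real r * u) = r * xLn u + r * ln r * Re u"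
proof (cases "u = 0")
  case False
  have "Ln (of_real r * u) = of_real (ln r) + Ln u"
    using Ln_times_of_real[OF assms False] by (simp add: Ln_of_real assms)
  then show ?thesis
    unfolding xLn_def by (simp add: algebra_simps)
qed (simp add: xLn_def)

lemma DERIV_mult_Ln:
  "u \<notin> \<real>\<^sub>\<le>\<^sub>0 \<Longrightarrow> ((\<lambda>s. s * Ln s) has_field_derivative Ln u + 1) (at u)"
  by (auto intro!: derivative_eq_intros simp: field_simps)

lemma isCont_xLn: "u \<notin> \<real>\<^sub>\<le>\<^sub>0 \<Longrightarrow> isCont xLn u"
  unfolding xLn_def[abs_def] using DERIV_mult_Ln DERIV_isCont isCont_Re by blast

lemma DERIV_Re_of_real:
  assumes "(f has_field_derivative D) (at (of_real x))"
  shows "((\<lambda>x. Re (f (of_real x))) has_real_derivative Re D) (at x)"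
proof -
  have "((\<lambda>x. f (of_real x)) has_vector_derivative D) (at x)"
    using has_vector_derivative_real_field[OF assms] .
  from bounded_linear.has_derivative[OF bounded_linear_Re this[unfolded has_vector_derivative_def]]
  have "((\<lambda>x. Re (f (of_real x))) has_derivative (\<lambda>h. Re (h *\<^sub>R D))) (at x)" .
  moreover have "(\<lambda>h. Re (h *\<^sub>R D)) = (*) (Re D)"
    by (auto simp: fun_eq_iff)
  ultimately show ?thesis
    by (simp add: has_field_derivative_def)
qed

lemma Re_root_factor: "Re (root_factor z x) = 1 - x * Im z"
  and Im_root_factor: "Im (root_factor z x) = x * Re z"
  by (simp_all add: root_factor_def)

lemma root_factor_imaginary: "Re z = 0 \<Longrightarrow> root_factor z x = of_real (1 - x * Im z)"
  by (simp add: complex_eq_iff Re_root_factor Im_root_factor)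

lemma DERIV_xLn_root_factor_slit:
  assumes "root_factor z x \<notin> \<real>\<^sub>\<le>\<^sub>0"
  shows "((\<lambda>x. xLn (root_factor z x)) has_real_derivative Re (\<i> * z * Ln (root_factor z x)) - Im z) (at x)"
proof -
  have inner: "((\<lambda>s. 1 + \<i> * s * z) has_field_derivative \<i> * z) (at (of_real x))"
    by (auto intro!: derivative_eq_intros)
  have "((\<lambda>s. s * Ln s) has_field_derivative Ln (root_factor z x) + 1) (at (1 + \<i> * of_real x * z))"
    using DERIV_mult_Ln[OF assms] by (simp add: root_factor_def)
  from DERIV_chain2[OF this inner]
  have "((\<lambda>s. (1 + \<i> * s * z) * Ln (1 + \<i> * s * z)) has_field_derivative
          (Ln (root_factor z x) + 1) * (\<i> * z)) (at (of_real x))" .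
  from DERIV_Re_of_real[OF this]
  have "((\<lambda>x. xLn (root_factor z x)) has_real_derivative Re ((Ln (root_factor z x) + 1) * (\<i> * z))) (at x)"
    by (simp only: xLn_def root_factor_def)
  moreover have "Re ((Ln (root_factor z x) + 1) * (\<i> * z)) = Re (\<i> * z * Ln (root_factor z x)) - Im z"
    by (simp add: algebra_simps)
  ultimately show ?thesis
    by (rule DERIV_cong)
qed

lemma DERIV_xLn_root_factor:
  assumes w: "root_factor z x \<noteq> 0"
  shows "((\<lambda>x. xLn (root_factor z x)) has_real_derivative Re (\<i> * z * Ln (root_factor z x)) - Im z) (at x)"
proof (cases "root_factor z x \<in> \<real>\<^sub>\<le>\<^sub>0")
  case False
  then show ?thesis
    by (rule DERIV_xLn_root_factor_slit)
next
  case True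
  \<comment> \<open>on the branch cut \<open>z\<close> is purely imaginary, so the function is real and \<open>Ln\<close> is not needed\<close>
  then have "Re z = 0"
    by (auto simp: complex_nonpos_Reals_iff Im_root_factor root_factor_def)
  let ?r = "1 - x * Im z"
  have r: "?r \<noteq> 0"
    using w unfolding root_factor_imaginary[OF \<open>Re z = 0\<close>] by (metis of_real_0)
  have eq: "(\<lambda>x. xLn (root_factor z x)) = (\<lambda>x. (\<lambda>r. r * ln \<bar>r\<bar>) (1 - x * Im z))"
    by (simp only: root_factor_imaginary[OF \<open>Re z = 0\<close>] xLn_of_real)
  have "((\<lambda>x. (\<lambda>r. r * ln \<bar>r\<bar>) (1 - x * Im z)) has_real_derivative (ln \<bar>?r\<bar> + 1) * (- Im z)) (at x)"
    by (rule DERIV_chain2[where g = "\<lambda>x. 1 - x * Im z", OF DERIV_mult_ln_abs[OF r]])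
      (auto intro!: derivative_eq_intros)
  moreover have "Re (\<i> * z * Ln (root_factor z x)) - Im z = (ln \<bar>?r\<bar> + 1) * (- Im z)"
  proof -
    have "\<i> * z = of_real (- Im z)"
      using \<open>Re z = 0\<close> by (simp add: complex_eq_iff)
    moreover have "Re (Ln (root_factor z x)) = ln \<bar>?r\<bar>"
      using Re_Ln[OF w] unfolding root_factor_imaginary[OF \<open>Re z = 0\<close>] norm_of_real .
    ultimately show ?thesis
      by (simp add: algebra_simps)
  qed
  ultimately show ?thesis
    unfolding eq by simp
qed

lemma isCont_xLn_root_factor: "isCont (\<lambda>y. xLn (root_factor z y)) x"
proof (cases "root_factor z x = 0")
  case False
  then show ?thesis
    using DERIV_xLn_root_factor DERIV_isCont by blast
next
  case True
  then have "Re z = 0"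
    by (auto simp: root_factor_def complex_eq_iff)
  then have "(\<lambda>y. xLn (root_factor z y)) = (\<lambda>y. (\<lambda>r. r * ln \<bar>r\<bar>) (1 - y * Im z))"
    by (simp only: root_factor_imaginary xLn_of_real)
  then show ?thesis
    by (auto intro!: isCont_o2[OF _ isCont_mult_ln_abs])
qed

lemma DERIV_log_primitive:
  assumes x: "x \<noteq> 0" and w: "root_factor z x \<noteq> 0"
  shows "(log_primitive z has_real_derivative ln (cmod (root_factor z x)) / x\<^sup>2) (at x)"
proof -
  let ?w = "root_factor z x"
  have "?w * Ln ?w = Ln ?w + of_real x * (\<i> * z * Ln ?w)"
    by (simp add: root_factor_def algebra_simps)
  then have expand: "xLn ?w = Re (Ln ?w) + x * Re (\<i> * z * Ln ?w)"
    unfolding xLn_def by simp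
  have "log_primitive z = (\<lambda>x. - (xLn (root_factor z x) / x) - Im z * ln \<bar>x\<bar>)"
    unfolding log_primitive_def by auto
  moreover have "((\<lambda>x. - (xLn (root_factor z x) / x) - Im z * ln \<bar>x\<bar>) has_real_derivative
      - (((Re (\<i> * z * Ln ?w) - Im z) * x - xLn ?w * 1) / (x * x)) - Im z * (1 / x)) (at x)"
    using DERIV_diff[OF DERIV_minus[OF DERIV_divide[OF DERIV_xLn_root_factor[OF w] DERIV_ident x]]
        DERIV_cmult[OF DERIV_ln_abs[OF x]]] .
  moreover have "- (((Re (\<i> * z * Ln ?w) - Im z) * x - xLn ?w * 1) / (x * x)) - Im z * (1 / x) =
      ln (cmod ?w) / x\<^sup>2"
    using x w by (simp add: expand field_simps power2_eq_square)
  ultimately show ?thesis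
    by simp
qed

lemma isCont_log_primitive: "x \<noteq> 0 \<Longrightarrow> isCont (log_primitive z) x"
  unfolding log_primitive_def[abs_def]
  using isCont_xLn_root_factor DERIV_isCont[OF DERIV_ln_abs]
  by (intro continuous_intros) auto

lemma finite_root_factor_zeros: "finite {x. root_factor z x = 0}"
proof (rule finite_subset)
  show "{x. root_factor z x = 0} \<subseteq> {Re (- 1 / (\<i> * z))}"
  proof
    fix x assume "x \<in> {x. root_factor z x = 0}"
    then have "of_real x * (\<i> * z) = - 1"
      by (simp add: root_factor_def algebra_simps eq_neg_iff_add_eq_0)
    moreover from this have "\<i> * z \<noteq> 0"
      by auto
    ultimately have "of_real x = - 1 / (\<i> * z)"
      by (simp add: field_simps)
    then show "x \<in> {Re (- 1 / (\<i> * z))}"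
      by (metis Re_complex_of_real singletonI)
  qed
qed simp

text \<open>The primitive is odd up to \<open>o(\<epsilon>)\<close> at \<open>0\<close>, since \<open>xLn (root_factor z \<epsilon>) = - Im z \<epsilon> + o(\<epsilon>)\<close>.\<close>

lemma log_primitive_tendsto_0:
  "((\<lambda>\<epsilon>. log_primitive z (- \<epsilon>) - log_primitive z \<epsilon>) \<longlongrightarrow> 0) (at_right 0)"
proof -
  define k where "k y = xLn (root_factor z y) + xLn (root_factor z (- y))" for y
  have d: "((\<lambda>y. xLn (root_factor z y)) has_real_derivative - Im z) (at 0)"
    using DERIV_xLn_root_factor[of z 0] by (simp add: root_factor_def)
  have "((\<lambda>y. xLn (root_factor z y)) has_real_derivative - Im z) (at (- 0))"
    using d by simp
  from DERIV_chain2[OF this DERIV_minus[OF DERIV_ident]]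
  have "((\<lambda>y. xLn (root_factor z (- y))) has_real_derivative - Im z * - 1) (at 0)"
    by simp
  from DERIV_add[OF d this] have "(k has_real_derivative 0) (at 0)"
    by (simp add: k_def[abs_def])
  moreover have "k 0 = 0"
    by (simp add: k_def root_factor_def xLn_def)
  ultimately have "((\<lambda>y. k y / y) \<longlongrightarrow> 0) (at 0)"
    by (simp add: has_field_derivative_iff)
  moreover have "log_primitive z (- \<epsilon>) - log_primitive z \<epsilon> = k \<epsilon> / \<epsilon>" for \<epsilon>
    by (cases "\<epsilon> = 0") (simp_all add: log_primitive_def k_def field_simps)
  ultimately show ?thesis
    by (simp add: filterlim_at_split)
qed

text \<open>This is where \<open>\<pi> |Re z|\<close> comes from: \<open>Ln (-u) = Ln u - sgn (Im u) i \<pi>\<close> for \<open>u = i z \<notin> \<real>\<close>.\<close>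

lemma xLn_opposite:
  assumes "Re z \<noteq> 0"
  shows "xLn (\<i> * z) + xLn (- (\<i> * z)) = - pi * \<bar>Re z\<bar>"
proof -
  have u: "\<i> * z \<noteq> 0"
    using assms by auto
  show ?thesis
  proof (cases "Re z > 0")
    case True
    then have L: "Ln (- (\<i> * z)) = Ln (\<i> * z) - \<i> * pi"
      using Ln_minus[OF u] by simp
    show ?thesis
      using True unfolding xLn_def L by (simp add: algebra_simps)
  next
    case False
    then have "Re z < 0"
      using assms by simp
    then have L: "Ln (- (\<i> * z)) = Ln (\<i> * z) + \<i> * pi"
      using Ln_minus[OF u] by simp
    show ?thesis
      using \<open>Re z < 0\<close> unfolding xLn_def L by (simp add: algebra_simps)
  qed
qed

lemma log_primitive_symmetric_difference:
  assumes R: "R > 0"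
  shows "log_primitive z R - log_primitive z (- R) =
    - (xLn (of_real (1 / R) + \<i> * z) + xLn (of_real (1 / R) - \<i> * z)) - 2 * (ln R / R)"
proof -
  define a b where "a = of_real (1 / R) + \<i> * z" and "b = of_real (1 / R) - \<i> * z"
  have factors: "root_factor z R = of_real R * a" "root_factor z (- R) = of_real R * b"
    using R by (simp_all add: a_def b_def root_factor_def field_simps)
  have "log_primitive z R - log_primitive z (- R) = - (xLn (root_factor z R) + xLn (root_factor z (- R))) / R"
    using R by (simp add: log_primitive_def field_simps)
  also have "\<dots> = - (R * xLn a + R * ln R * Re a + (R * xLn b + R * ln R * Re b)) / R"
    unfolding factors xLn_scaleR[OF R] ..
  also have "\<dots> = - (xLn a + xLn b) - 2 * (ln R / R)"
    using R by (simp add: a_def b_def field_simps)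
  finally show ?thesis
    unfolding a_def b_def .
qed

lemma xLn_pair_tendsto_at_top:
  "((\<lambda>R. xLn (of_real (1 / R) + \<i> * z) + xLn (of_real (1 / R) - \<i> * z)) \<longlongrightarrow> - pi * \<bar>Re z\<bar>) at_top"
proof -
  have inv: "((\<lambda>R::real. 1 / R) \<longlongrightarrow> 0) at_top"
    by real_asymp
  show ?thesis
  proof (cases "Re z = 0")
    case False
    have "\<i> * z \<notin> \<real>\<^sub>\<le>\<^sub>0" "- (\<i> * z) \<notin> \<real>\<^sub>\<le>\<^sub>0"
      using False by (auto simp: complex_nonpos_Reals_iff)
    moreover have "((\<lambda>R. of_real (1 / R) + \<i> * z) \<longlongrightarrow> \<i> * z) at_top"
      using tendsto_add[OF tendsto_of_real[OF inv] tendsto_const[of "\<i> * z"]] by simp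
    moreover have "((\<lambda>R. of_real (1 / R) - \<i> * z) \<longlongrightarrow> - (\<i> * z)) at_top"
      using tendsto_diff[OF tendsto_of_real[OF inv] tendsto_const[of "\<i> * z"]] by simp
    ultimately have "((\<lambda>R. xLn (of_real (1 / R) + \<i> * z) + xLn (of_real (1 / R) - \<i> * z)) \<longlongrightarrow>
        xLn (\<i> * z) + xLn (- (\<i> * z))) at_top"
      by (intro tendsto_add isCont_tendsto_compose[OF isCont_xLn]) auto
    then show ?thesis
      using xLn_opposite[OF False] by simp
  next
    case True
    let ?h = "\<lambda>r::real. r * ln \<bar>r\<bar>"
    have "\<i> * z = of_real (- Im z)"
      using True by (simp add: complex_eq_iff)
    then have "xLn (of_real (1 / R) + \<i> * z) + xLn (of_real (1 / R) - \<i> * z) =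
        ?h (1 / R - Im z) + ?h (1 / R + Im z)" for R
      by (simp flip: xLn_of_real)
    moreover have "((\<lambda>R. ?h (1 / R - Im z) + ?h (1 / R + Im z)) \<longlongrightarrow> ?h (0 - Im z) + ?h (0 + Im z)) at_top"
      by (intro tendsto_add isCont_tendsto_compose[OF isCont_mult_ln_abs] tendsto_intros inv)
    ultimately show ?thesis
      using True by simp
  qed
qed

lemma log_primitive_tendsto_at_top:
  "((\<lambda>R. log_primitive z R - log_primitive z (- R)) \<longlongrightarrow> pi * \<bar>Re z\<bar>) at_top"
proof -
  have "((\<lambda>R. - (xLn (of_real (1 / R) + \<i> * z) + xLn (of_real (1 / R) - \<i> * z)) - 2 * (ln R / R))
      \<longlongrightarrow> - (- pi * \<bar>Re z\<bar>) - 2 * 0) at_top"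
    by (intro tendsto_intros xLn_pair_tendsto_at_top ln_x_over_x_tendsto_0)
  then have "((\<lambda>R. - (xLn (of_real (1 / R) + \<i> * z) + xLn (of_real (1 / R) - \<i> * z)) - 2 * (ln R / R))
      \<longlongrightarrow> pi * \<bar>Re z\<bar>) at_top"
    by simp
  moreover have "\<forall>\<^sub>F R in at_top. - (xLn (of_real (1 / R) + \<i> * z) + xLn (of_real (1 / R) - \<i> * z)) -
      2 * (ln R / R) = log_primitive z R - log_primitive z (- R)"
    using eventually_gt_at_top[of 0] by eventually_elim (simp add: log_primitive_symmetric_difference)
  ultimately show ?thesis
    by (rule Lim_transform_eventually)
qed

lemma has_integral_sum_log_primitive:
  fixes z :: "'i \<Rightarrow> complex" and p :: "real \<Rightarrow> real"
  assumes I: "finite I" and p: "\<And>x. (\<Prod>i\<in>I. root_factor (z i) x) = of_real (p x)"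
    and "a \<le> b" "0 \<notin> {a..b}"
  shows "((\<lambda>x. (1 / x\<^sup>2) * ln \<bar>p x\<bar>) has_integral
          (\<Sum>i\<in>I. log_primitive (z i) b) - (\<Sum>i\<in>I. log_primitive (z i) a)) {a..b}"
proof -
  define F where "F x = (\<Sum>i\<in>I. log_primitive (z i) x)" for x
  define S where "S = (\<Union>i\<in>I. {x. root_factor (z i) x = 0})"
  have "finite S"
    using I finite_root_factor_zeros by (simp add: S_def)
  have "(F has_real_derivative (1 / x\<^sup>2) * ln \<bar>p x\<bar>) (at x)" if "x \<noteq> 0" "x \<notin> S" for x
  proof -
    have w: "root_factor (z i) x \<noteq> 0" if "i \<in> I" for i
      using \<open>x \<notin> S\<close> that by (auto simp: S_def)
    have "(F has_real_derivative (\<Sum>i\<in>I. ln (cmod (root_factor (z i) x)) / x\<^sup>2)) (at x)"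
      unfolding F_def[abs_def] using DERIV_log_primitive[OF \<open>x \<noteq> 0\<close> w] by (rule DERIV_sum)
    also have "(\<Sum>i\<in>I. ln (cmod (root_factor (z i) x)) / x\<^sup>2) = (1 / x\<^sup>2) * ln \<bar>p x\<bar>"
      using w I by (simp add: prod_norm p flip: sum_divide_distrib ln_prod)
    finally show ?thesis .
  qed
  moreover have "continuous_on {a..b} F"
    using assms(4) unfolding F_def[abs_def]
    by (intro continuous_at_imp_continuous_on ballI continuous_sum isCont_log_primitive) auto
  ultimately have "((\<lambda>x. (1 / x\<^sup>2) * ln \<bar>p x\<bar>) has_integral F b - F a) {a..b}"
    using assms(4) by (intro fundamental_theorem_of_calculus_interior_strong[OF \<open>finite S\<close> \<open>a \<le> b\<close>])
      (auto simp flip: has_real_derivative_iff_has_vector_derivative)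
  then show ?thesis
    by (simp add: F_def)
qed

lemma integral_ln_abs_prod_root_factor_tendsto:
  fixes z :: "'i \<Rightarrow> complex" and p :: "real \<Rightarrow> real"
  assumes I: "finite I" and p: "\<And>x. (\<Prod>i\<in>I. root_factor (z i) x) = of_real (p x)"
  shows "((\<lambda>(\<epsilon>, R). (1 / pi) * integral ({-R..-\<epsilon>} \<union> {\<epsilon>..R}) (\<lambda>x. (1 / x\<^sup>2) * ln \<bar>p x\<bar>))
            \<longlongrightarrow> (\<Sum>i\<in>I. \<bar>Re (z i)\<bar>)) (at_right 0 \<times>\<^sub>F at_top)"
proof -
  define F where "F x = (\<Sum>i\<in>I. log_primitive (z i) x)" for x
  define g where "g = (\<lambda>x. (1 / x\<^sup>2) * ln \<bar>p x\<bar>)"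
  have integral: "integral ({-R..-\<epsilon>} \<union> {\<epsilon>..R}) g = (F (- \<epsilon>) - F \<epsilon>) + (F R - F (- R))"
    if "0 < \<epsilon>" "\<epsilon> < R" for \<epsilon> R
  proof -
    have "(g has_integral (F (- \<epsilon>) - F (- R)) + (F R - F \<epsilon>)) ({-R..-\<epsilon>} \<union> {\<epsilon>..R})"
      using that unfolding F_def g_def by (intro has_integral_Un has_integral_sum_log_primitive[OF I p]) auto
    then show ?thesis
      by (simp add: integral_unique)
  qed
  have "((\<lambda>\<epsilon>. F (- \<epsilon>) - F \<epsilon>) \<longlongrightarrow> (\<Sum>i\<in>I. 0)) (at_right 0)"
    unfolding F_def sum_subtractf[symmetric] by (intro tendsto_sum log_primitive_tendsto_0)
  from filterlim_compose[OF this filterlim_fst]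
  have lim_0: "((\<lambda>q. F (- fst q) - F (fst q)) \<longlongrightarrow> 0) (at_right 0 \<times>\<^sub>F at_top)"
    by simp
  have "((\<lambda>R. F R - F (- R)) \<longlongrightarrow> (\<Sum>i\<in>I. pi * \<bar>Re (z i)\<bar>)) at_top"
    unfolding F_def sum_subtractf[symmetric] by (intro tendsto_sum log_primitive_tendsto_at_top)
  from filterlim_compose[OF this filterlim_snd]
  have lim_infinity: "((\<lambda>q. F (snd q) - F (- snd q)) \<longlongrightarrow> pi * (\<Sum>i\<in>I. \<bar>Re (z i)\<bar>)) (at_right 0 \<times>\<^sub>F at_top)"
    by (simp add: sum_distrib_left)
  have "((\<lambda>q. (1 / pi) * ((F (- fst q) - F (fst q)) + (F (snd q) - F (- snd q))))
      \<longlongrightarrow> (1 / pi) * (0 + pi * (\<Sum>i\<in>I. \<bar>Re (z i)\<bar>))) (at_right 0 \<times>\<^sub>F at_top)"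
    by (intro tendsto_intros lim_0 lim_infinity)
  then have "((\<lambda>q. (1 / pi) * ((F (- fst q) - F (fst q)) + (F (snd q) - F (- snd q))))
      \<longlongrightarrow> (\<Sum>i\<in>I. \<bar>Re (z i)\<bar>)) (at_right 0 \<times>\<^sub>F at_top)"
    by simp
  moreover have "\<forall>\<^sub>F q :: real \<times> real in at_right 0 \<times>\<^sub>F at_top. 0 < fst q \<and> fst q < 1 \<and> 1 < snd q"
    using eventually_prodI[OF eventually_at_right_real[of 0 1] eventually_gt_at_top[of 1]] by simp
  then have "\<forall>\<^sub>F q in at_right 0 \<times>\<^sub>F at_top.
      (1 / pi) * ((F (- fst q) - F (fst q)) + (F (snd q) - F (- snd q))) =
      (\<lambda>(\<epsilon>, R). (1 / pi) * integral ({-R..-\<epsilon>} \<union> {\<epsilon>..R}) g) q"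
    by eventually_elim (auto simp: integral split: prod.splits)
  ultimately show ?thesis
    unfolding g_def by (rule Lim_transform_eventually)
qed

theorem theorem3p2:
  fixes n :: nat and Ar :: "nat \<Rightarrow> nat \<Rightarrow> bool" and \<sigma> :: "nat \<Rightarrow> nat \<Rightarrow> int"
  assumes "Delta2 n Ar \<sigma>"
  defines "f \<equiv> (\<lambda>z::real. (1 / z\<^sup>2) *
              ln \<bar>1 + (\<Sum>j = 1..n div 2. (-1) ^ j * real (num_linear n Ar (2 * j)) * z ^ (2 * j))\<bar>)"
  shows "((\<lambda>(\<epsilon>, R). (1 / pi) * integral ({-R..-\<epsilon>} \<union> {\<epsilon>..R}) f)
            \<longlongrightarrow> sidi_energy n Ar \<sigma>) (at_right 0 \<times>\<^sub>F at_top)"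
proof -
  obtain z where energy: "sidi_energy n Ar \<sigma> = (\<Sum>k<n. \<bar>Re (z k)\<bar>)"
    and roots: "\<And>t. poly (char_poly (adj_matrix n Ar \<sigma>)) t = (\<Prod>k<n. t - z k)"
    using sidi_energy_eigenvalues by blast
  have "(\<Prod>k<n. t - z k) = t ^ n + (\<Sum>j = 1..n div 2. of_real (real (num_linear n Ar (2 * j))) * t ^ (n - 2 * j))"
    for t
    using Delta2_char_poly[OF assms(1)] roots by simp
  then have "\<And>x. (\<Prod>k<n. root_factor (z k) x) =
      of_real (1 + (\<Sum>j = 1..n div 2. (-1) ^ j * real (num_linear n Ar (2 * j)) * x ^ (2 * j)))"
    by (intro prod_root_factor_reciprocal) auto
  from integral_ln_abs_prod_root_factor_tendsto[OF finite_lessThan this]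
  show ?thesis
    unfolding f_def energy .
qed

end
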